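(* Let $q$ be a prime power and let $\mathcal{F}=(\mathcal{F}_1,\ldots,\mathcal{F}_r)$ be a flag on $\mathbb{F}_{q^n}$. Then $$\mathrm{Stab}^+(\mathcal{F})=\mathrm{Stab}(\mathcal{F})\cup\{0\}=\bigcap_{i=1}^r\mathrm{Stab}^+(\mathcal{F}_i),$$ and every subspace $\mathcal{F}_i$ is a vector space over $\mathrm{Stab}^+(\mathcal{F})$. Moreover, if $1\in\mathcal{F}_1$, then $\mathrm{Stab}^+(\mathcal{F})$ is contained in every subspace $\mathcal{F}_i$, $1\le i\le r$.
   Context: $\mathbb{F}_{q^n}$ is regarded as an $\mathbb{F}_q$-vector space. A flag on $\mathbb{F}_{q^n}$ is a sequence $(\mathcal{F}_1,\ldots,\mathcal{F}_r)$ of $\mathbb{F}_q$-subspaces with $\{0\}\subsetneq\mathcal{F}_1\subsetneq\cdots\subsetneq\mathcal{F}_r\subsetneq\mathbb{F}_{q^n}$. For $\gamma\in\mathbb{F}_{q^n}^*$ and an $\mathbb{F}_q$-subspace $\mathcal{U}$, $\mathcal{U}\gamma=\{u\gamma:u\in\mathcal{U}\}$, and $\mathcal{F}\gamma=(\mathcal{F}_1\gamma,\ldots,\mathcal{F}_r\gamma)$. The stabilizers under the full group $\mathbb{F}_{q^n}^*$ are $\mathrm{Stab}(\mathcal{U})=\{\gamma\in\mathbb{F}_{q^n}^*:\mathcal{U}\gamma=\mathcal{U}\}$ and $\mathrm{Stab}(\mathcal{F})=\{\gamma\in\mathbb{F}_{q^n}^*:\mathcal{F}\gamma=\mathcal{F}\}$.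 The stabilizer subfield $\mathrm{Stab}^+(\mathcal{U})$ (resp. $\mathrm{Stab}^+(\mathcal{F})$) is the smallest subfield of $\mathbb{F}_{q^n}$ containing both $\mathbb{F}_q$ and $\mathrm{Stab}(\mathcal{U})$ (resp. $\mathrm{Stab}(\mathcal{F})$). *)

theory Defs
  imports "HOL-Computational_Algebra.Primes"
begin

text \<open>The ambient field F_{q^n} is the (finite) type 'a; the base field F_q is a
  subfield K of it.\<close>

definition subfield :: "'a::field set \<Rightarrow> bool" where
  "subfield L \<longleftrightarrow> 0 \<in> L \<and> 1 \<in> L \<and>
     (\<forall>x\<in>L. \<forall>y\<in>L. x + y \<in> L \<and> x * y \<in> L) \<and>
     (\<forall>x\<in>L. - x \<in> L) \<and> (\<forall>x\<in>L. x \<noteq> 0 \<longrightarrow> inverse x \<in> L)"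

definition subspace_over :: "'a::field set \<Rightarrow> 'a set \<Rightarrow> bool" where
  "subspace_over L U \<longleftrightarrow> 0 \<in> U \<and> (\<forall>x\<in>U. \<forall>y\<in>U. x + y \<in> U) \<and>
     (\<forall>c\<in>L. \<forall>u\<in>U. c * u \<in> U)"

definition is_flag :: "'a::field set \<Rightarrow> nat \<Rightarrow> (nat \<Rightarrow> 'a set) \<Rightarrow> bool" where
  "is_flag K r F \<longleftrightarrow> (\<forall>i\<in>{1..r}. subspace_over K (F i)) \<and>
     (r \<ge> 1 \<longrightarrow> {0} \<subset> F 1 \<and> F r \<subset> UNIV) \<and>
     (\<forall>i\<in>{1..<r}. F i \<subset> F (Suc i))"

definition mult_set :: "'a::field set \<Rightarrow> 'a \<Rightarrow> 'a set" where
  "mult_set U \<gamma> = (\<lambda>u. u * \<gamma>) ` U"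

definition Stab :: "'a::field set \<Rightarrow> 'a set" where
  "Stab U = {\<gamma>. \<gamma> \<noteq> 0 \<and> mult_set U \<gamma> = U}"

definition Stab_flag :: "nat \<Rightarrow> (nat \<Rightarrow> 'a::field set) \<Rightarrow> 'a set" where
  "Stab_flag r F = {\<gamma>. \<gamma> \<noteq> 0 \<and> (\<forall>i\<in>{1..r}. mult_set (F i) \<gamma> = F i)}"

definition gen_subfield :: "'a::field set \<Rightarrow> 'a set \<Rightarrow> 'a set" where
  "gen_subfield K S = \<Inter> {L. subfield L \<and> K \<subseteq> L \<and> S \<subseteq> L}"

end

theory Submission
  imports Defs
begin

text \<open>For an \<open>F\<^sub>q\<close>-subspace \<open>U\<close> of the finite field let \<open>M(U) = {g. g U \<subseteq> U}\<close>. Since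
  multiplication by a nonzero \<open>g\<close> is injective and \<open>U\<close> is finite, \<open>g U \<subseteq> U\<close> already forces
  \<open>g U = U\<close>; so \<open>Stab(U) = M(U) - {0}\<close>, and the same argument gives closure of \<open>M(U)\<close> under
  inverses. Thus \<open>M(U)\<close> is a subfield containing \<open>F\<^sub>q\<close>, hence equal to \<open>Stab\<^sup>+(U)\<close>, and for a
  flag the intersection of the \<open>M(F\<^sub>i)\<close> plays the same role. Each \<open>F\<^sub>i\<close> is an \<open>M(F\<^sub>i)\<close>-space
  by construction, and \<open>1 \<in> F\<^sub>i\<close> gives \<open>M(F\<^sub>i) = M(F\<^sub>i) \<cdot> 1 \<subseteq> F\<^sub>i\<close>. Only the finiteness of the
  ambient field is used, not the values of \<open>q\<close> and \<open>n\<close>.\<close>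

definition multipliers :: "'a::field set \<Rightarrow> 'a set" where
  "multipliers U = {g. \<forall>u\<in>U. g * u \<in> U}"

lemma multipliersI: "(\<And>u. u \<in> U \<Longrightarrow> g * u \<in> U) \<Longrightarrow> g \<in> multipliers U"
  by (simp add: multipliers_def)

lemma multipliersD: "g \<in> multipliers U \<Longrightarrow> u \<in> U \<Longrightarrow> g * u \<in> U"
  by (simp add: multipliers_def)

lemma mult_set_eq_iff_multipliers:
  fixes U :: "'a::field set"
  assumes "finite U" and "g \<noteq> 0"
  shows "mult_set U g = U \<longleftrightarrow> g \<in> multipliers U"
proof
  assume "mult_set U g = U"
  then show "g \<in> multipliers U"
    by (auto simp: mult_set_def multipliers_def mult.commute)
next
  assume "g \<in> multipliers U"
  then have "mult_set U g \<subseteq> U"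
    by (auto simp: mult_set_def multipliers_def mult.commute)
  moreover have "card (mult_set U g) = card U"
    unfolding mult_set_def using \<open>g \<noteq> 0\<close> by (simp add: card_image inj_on_def)
  ultimately show "mult_set U g = U"
    using \<open>finite U\<close> by (simp add: card_subset_eq)
qed

lemma Stab_eq_multipliers:
  "finite U \<Longrightarrow> Stab U = multipliers U - {0}"
  using mult_set_eq_iff_multipliers unfolding Stab_def by blast

lemma Stab_flag_eq_multipliers:
  assumes "\<And>i. i \<in> {1..r} \<Longrightarrow> finite (F i)"
  shows "Stab_flag r F = (\<Inter>i\<in>{1..r}. multipliers (F i)) - {0}"
  using assms mult_set_eq_iff_multipliers unfolding Stab_flag_def by blast

lemma Stab_flag_Un_zero:
  assumes "\<And>i. i \<in> {1..r} \<Longrightarrow> finite (F i)" and "\<And>i. i \<in> {1..r} \<Longrightarrow> 0 \<in> F i"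
  shows "Stab_flag r F \<union> {0} = (\<Inter>i\<in>{1..r}. multipliers (F i))"
proof -
  have "Stab_flag r F = (\<Inter>i\<in>{1..r}. multipliers (F i)) - {0}"
    using assms(1) by (rule Stab_flag_eq_multipliers)
  then show ?thesis
    using assms(2) by (auto simp: multipliers_def)
qed

lemma subspace_over_iff_multipliers:
  "subspace_over L U \<longleftrightarrow> 0 \<in> U \<and> (\<forall>x\<in>U. \<forall>y\<in>U. x + y \<in> U) \<and> L \<subseteq> multipliers U"
  by (auto simp: subspace_over_def multipliers_def)

lemma multipliers_subset:
  "1 \<in> U \<Longrightarrow> multipliers U \<subseteq> U"
  using multipliersD[of _ U 1] by auto

lemma subfield_multipliers:
  fixes U :: "'a::field set"
  assumes "finite U" and "subfield K" and "subspace_over K U"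
  shows "subfield (multipliers U)"
  unfolding subfield_def
proof (intro conjI ballI impI)
  have U0: "0 \<in> U" and U_add: "\<And>x y. x \<in> U \<Longrightarrow> y \<in> U \<Longrightarrow> x + y \<in> U"
    and K_mult: "K \<subseteq> multipliers U"
    using assms(3) by (auto simp: subspace_over_iff_multipliers)
  show "0 \<in> multipliers U"
    by (rule multipliersI) (simp add: U0)
  show "1 \<in> multipliers U"
    by (rule multipliersI) simp
  have mult_closed: "x * y \<in> multipliers U"
    if "x \<in> multipliers U" and "y \<in> multipliers U" for x y
    by (rule multipliersI) (simp add: mult.assoc multipliersD that)
  fix x assume x: "x \<in> multipliers U"
  show "x * y \<in> multipliers U" if "y \<in> multipliers U" for y
    using mult_closed x that .
  show "x + y \<in> multipliers U" if y: "y \<in> multipliers U" for y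
    by (rule multipliersI) (simp add: distrib_right U_add multipliersD x y)
  have "- 1 \<in> multipliers U"
    using K_mult \<open>subfield K\<close> by (auto simp: subfield_def)
  then show "- x \<in> multipliers U"
    using mult_closed x by fastforce
  assume "x \<noteq> 0"
  then have onto: "mult_set U x = U"
    using x \<open>finite U\<close> by (simp add: mult_set_eq_iff_multipliers)
  show "inverse x \<in> multipliers U"
  proof (rule multipliersI)
    fix u assume "u \<in> U"
    then obtain v where "v \<in> U" and "u = v * x"
      using onto unfolding mult_set_def by blast
    then show "inverse x * u \<in> U"
      using \<open>x \<noteq> 0\<close> by (simp add: mult.left_commute)
  qed
qed

lemma subfield_INTER:
  "(\<And>i. i \<in> I \<Longrightarrow> subfield (L i)) \<Longrightarrow> subfield (\<Inter>i\<in>I. L i)"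
  unfolding subfield_def by (intro conjI ballI impI; simp)

lemma gen_subfield_eqI:
  assumes "subfield L" and "K \<subseteq> L" and "S \<subseteq> L" and "L - {0} \<subseteq> S"
  shows "gen_subfield K S = L"
proof
  show "gen_subfield K S \<subseteq> L"
    using assms(1-3) unfolding gen_subfield_def by blast
  show "L \<subseteq> gen_subfield K S"
    using assms(4) unfolding gen_subfield_def subfield_def by blast
qed

lemma gen_subfield_Stab:
  assumes "finite U" and "subfield K" and "subspace_over K U"
  shows "gen_subfield K (Stab U) = multipliers U"
  using assms by (intro gen_subfield_eqI subfield_multipliers)
    (auto simp: Stab_eq_multipliers subspace_over_iff_multipliers)

lemma gen_subfield_Stab_flag:
  assumes "subfield K"
    and "\<And>i. i \<in> {1..r} \<Longrightarrow> finite (F i)" and "\<And>i. i \<in> {1..r} \<Longrightarrow> subspace_over K (F i)"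
  shows "gen_subfield K (Stab_flag r F) = (\<Inter>i\<in>{1..r}. multipliers (F i))"
proof (rule gen_subfield_eqI)
  show "Stab_flag r F \<subseteq> (\<Inter>i\<in>{1..r}. multipliers (F i))"
    and "(\<Inter>i\<in>{1..r}. multipliers (F i)) - {0} \<subseteq> Stab_flag r F"
    using Stab_flag_eq_multipliers assms(2) by blast+
  show "subfield (\<Inter>i\<in>{1..r}. multipliers (F i))"
    using assms by (intro subfield_INTER subfield_multipliers)
  show "K \<subseteq> (\<Inter>i\<in>{1..r}. multipliers (F i))"
    using assms(3) unfolding subspace_over_iff_multipliers by blast
qed

lemma flag_mono:
  assumes "is_flag K r F" and "1 \<le> i" and "i \<le> j" and "j \<le> r"
  shows "F i \<subseteq> F j"
  using assms(3,4)
proof (induction j rule: dec_induct)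
  case (step m)
  then have "F m \<subset> F (Suc m)"
    using assms(1,2) by (simp add: is_flag_def)
  then show ?case
    using step by auto
qed simp

theorem proposition3p7:
  fixes K :: "'a::{finite,field} set" and q n r :: nat and F :: "nat \<Rightarrow> 'a set"
  assumes "\<exists>p k. prime p \<and> k > 0 \<and> q = p ^ k"
    and "subfield K" and "card K = q"
    and "n \<ge> 1" and "card (UNIV :: 'a set) = q ^ n"
    and "is_flag K r F"
  shows "gen_subfield K (Stab_flag r F) = Stab_flag r F \<union> {0}
       \<and> Stab_flag r F \<union> {0} = (\<Inter>i\<in>{1..r}. gen_subfield K (Stab (F i)))
       \<and> (\<forall>i\<in>{1..r}. subspace_over (gen_subfield K (Stab_flag r F)) (F i))
       \<and> (r \<ge> 1 \<longrightarrow> 1 \<in> F 1 \<longrightarrow> (\<forall>i\<in>{1..r}. gen_subfield K (Stab_flag r F) \<subseteq> F i))"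
proof -
  define L where "L = (\<Inter>i\<in>{1..r}. multipliers (F i))"
  have F_sub: "subspace_over K (F i)" if "i \<in> {1..r}" for i
    using assms(6) that by (simp add: is_flag_def)
  have "gen_subfield K (Stab_flag r F) = L"
    unfolding L_def using gen_subfield_Stab_flag[of K r F] assms(2) F_sub by simp
  moreover have "Stab_flag r F \<union> {0} = L"
    unfolding L_def using F_sub by (intro Stab_flag_Un_zero) (auto simp: subspace_over_def)
  moreover have "(\<Inter>i\<in>{1..r}. gen_subfield K (Stab (F i))) = L"
    unfolding L_def using assms(2) F_sub by (simp add: gen_subfield_Stab)
  moreover have "subspace_over L (F i)" if "i \<in> {1..r}" for i
    using F_sub[OF that] that by (auto simp: subspace_over_iff_multipliers L_def)
  moreover have "L \<subseteq> F i" if "i \<in> {1..r}" and "1 \<in> F 1" for i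
  proof -
    have "1 \<in> F i"
      using that flag_mono[OF assms(6), of 1 i] by auto
    then have "multipliers (F i) \<subseteq> F i"
      by (rule multipliers_subset)
    then show ?thesis
      using that(1) unfolding L_def by blast
  qed
  ultimately show ?thesis
    by simp
qed

end
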